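(* Let $\Gamma$ be a finite connected tetravalent $G$-half-arc-transitive graph, $G\leq\mathrm{Aut}(\Gamma)$. Then $G$ has a normal subgroup $N$ such that $\Gamma_N$ is a tetravalent basic $G/N$-half-arc-transitive graph.
   Context: $\Gamma$ is $G$-half-arc-transitive if $G$ is transitive on vertices and edges but not on arcs. For $N\trianglelefteq G$, the normal quotient $\Gamma_N$ has as vertices the $N$-orbits on $V(\Gamma)$, two distinct orbits adjacent iff some edge of $\Gamma$ joins them; $G/N$ acts on it when $N$ is the kernel of the action. A connected tetravalent $X$-half-arc-transitive graph $\Sigma$ is basic (for $X$) if $\Sigma_M$ has valency at most 2 for every non-trivial normal subgroup $M$ of $X$. *)

theory Defs
  imports "HOL-Algebra.Algebra"
begin

text \<open>Permutation groups on V
are subgroups of the library group BijGroup V of (extensional) bijections of V.\<close>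

definition simple_graph :: "'a set \<Rightarrow> ('a \<Rightarrow> 'a \<Rightarrow> bool) \<Rightarrow> bool" where
  "simple_graph V E \<longleftrightarrow> (\<forall>x y. E x y \<longrightarrow> x \<in> V \<and> y \<in> V) \<and>
     (\<forall>x y. E x y \<longrightarrow> E y x) \<and> (\<forall>x. \<not> E x x)"

definition connected_graph :: "'a set \<Rightarrow> ('a \<Rightarrow> 'a \<Rightarrow> bool) \<Rightarrow> bool" where
  "connected_graph V E \<longleftrightarrow> V \<noteq> {} \<and>
     (\<forall>u\<in>V. \<forall>v\<in>V. (\<lambda>x y. E x y \<and> x \<in> V \<and> y \<in> V)\<^sup>*\<^sup>* u v)"

definition tetravalent :: "'a set \<Rightarrow> ('a \<Rightarrow> 'a \<Rightarrow> bool) \<Rightarrow> bool" where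
  "tetravalent V E \<longleftrightarrow> (\<forall>v\<in>V. card {u\<in>V. E v u} = 4)"

definition valency_le :: "nat \<Rightarrow> 'a set \<Rightarrow> ('a \<Rightarrow> 'a \<Rightarrow> bool) \<Rightarrow> bool" where
  "valency_le k V E \<longleftrightarrow> (\<forall>v\<in>V. finite {u\<in>V. E v u} \<and> card {u\<in>V. E v u} \<le> k)"

abbreviation perm_grp :: "'a set \<Rightarrow> ('a \<Rightarrow> 'a) set \<Rightarrow> ('a \<Rightarrow> 'a) monoid" where
  "perm_grp V G \<equiv> (BijGroup V)\<lparr>carrier := G\<rparr>"

definition is_automorphism :: "'a set \<Rightarrow> ('a \<Rightarrow> 'a \<Rightarrow> bool) \<Rightarrow> ('a \<Rightarrow> 'a) \<Rightarrow> bool" where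
  "is_automorphism V E g \<longleftrightarrow> g \<in> Bij V \<and> (\<forall>x\<in>V. \<forall>y\<in>V. E x y \<longleftrightarrow> E (g x) (g y))"

definition subgroup_Aut :: "('a \<Rightarrow> 'a) set \<Rightarrow> 'a set \<Rightarrow> ('a \<Rightarrow> 'a \<Rightarrow> bool) \<Rightarrow> bool" where
  "subgroup_Aut G V E \<longleftrightarrow> subgroup G (BijGroup V) \<and> (\<forall>g\<in>G. is_automorphism V E g)"

definition vertex_transitive :: "('a \<Rightarrow> 'a) set \<Rightarrow> 'a set \<Rightarrow> bool" where
  "vertex_transitive G V \<longleftrightarrow> (\<forall>u\<in>V. \<forall>v\<in>V. \<exists>g\<in>G. g u = v)"

definition edge_transitive :: "('a \<Rightarrow> 'a) set \<Rightarrow> 'a set \<Rightarrow> ('a \<Rightarrow> 'a \<Rightarrow> bool) \<Rightarrow> bool" where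
  "edge_transitive G V E \<longleftrightarrow> (\<forall>u v x y. E u v \<longrightarrow> E x y \<longrightarrow> (\<exists>g\<in>G. {g u, g v} = {x, y}))"

definition arc_transitive :: "('a \<Rightarrow> 'a) set \<Rightarrow> 'a set \<Rightarrow> ('a \<Rightarrow> 'a \<Rightarrow> bool) \<Rightarrow> bool" where
  "arc_transitive G V E \<longleftrightarrow> (\<forall>u v x y. E u v \<longrightarrow> E x y \<longrightarrow> (\<exists>g\<in>G. g u = x \<and> g v = y))"

definition half_arc_transitive :: "('a \<Rightarrow> 'a) set \<Rightarrow> 'a set \<Rightarrow> ('a \<Rightarrow> 'a \<Rightarrow> bool) \<Rightarrow> bool" where
  "half_arc_transitive G V E \<longleftrightarrow> subgroup_Aut G V E \<and> vertex_transitive G V \<and>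
     edge_transitive G V E \<and> \<not> arc_transitive G V E"

definition orbit :: "('a \<Rightarrow> 'a) set \<Rightarrow> 'a \<Rightarrow> 'a set" where
  "orbit N v = {g v | g. g \<in> N}"

definition quot_V :: "('a \<Rightarrow> 'a) set \<Rightarrow> 'a set \<Rightarrow> 'a set set" where
  "quot_V N V = orbit N ` V"

definition quot_E :: "('a \<Rightarrow> 'a) set \<Rightarrow> 'a set \<Rightarrow> ('a \<Rightarrow> 'a \<Rightarrow> bool) \<Rightarrow> 'a set \<Rightarrow> 'a set \<Rightarrow> bool" where
  "quot_E N V E A B \<longleftrightarrow> A \<in> quot_V N V \<and> B \<in> quot_V N V \<and> A \<noteq> B \<and>
     (\<exists>x\<in>A. \<exists>y\<in>B. E x y)"

text \<open>The action of g on the N-orbits, and the group induced by G on Gamma_N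
(isomorphic to G/N exactly when N is the kernel of this action).\<close>
definition induced_perm :: "('a \<Rightarrow> 'a) set \<Rightarrow> 'a set \<Rightarrow> ('a \<Rightarrow> 'a) \<Rightarrow> 'a set \<Rightarrow> 'a set" where
  "induced_perm N V g = (\<lambda>A \<in> quot_V N V. g ` A)"

definition induced_group :: "('a \<Rightarrow> 'a) set \<Rightarrow> ('a \<Rightarrow> 'a) set \<Rightarrow> 'a set \<Rightarrow> ('a set \<Rightarrow> 'a set) set" where
  "induced_group G N V = induced_perm N V ` G"

definition action_kernel :: "('a \<Rightarrow> 'a) set \<Rightarrow> ('a \<Rightarrow> 'a) set \<Rightarrow> 'a set \<Rightarrow> ('a \<Rightarrow> 'a) set" where
  "action_kernel G N V = {g \<in> G. induced_perm N V g = (\<lambda>A \<in> quot_V N V. A)}"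

definition basic :: "('a \<Rightarrow> 'a) set \<Rightarrow> 'a set \<Rightarrow> ('a \<Rightarrow> 'a \<Rightarrow> bool) \<Rightarrow> bool" where
  "basic H V E \<longleftrightarrow> connected_graph V E \<and> tetravalent V E \<and> half_arc_transitive H V E \<and>
     (\<forall>M. normal M (perm_grp V H) \<longrightarrow> M \<noteq> {(\<lambda>x \<in> V. x)} \<longrightarrow>
        valency_le 2 (quot_V M V) (quot_E M V E))"

end

theory Submission
  imports Defs
begin

text \<open>Choose \<open>N\<close> of maximal order among the normal subgroups of \<open>G\<close> whose normal quotient
is again tetravalent; the trivial subgroup is one of them. Half-arc-transitivity orients the
edges so that the stabiliser of a vertex is transitive on its out-neighbours and on its
in-neighbours, and counting arcs of the quotient shows that every normal quotient has valency
4 or at most 2. If \<open>\<Gamma>\<^sub>N\<close> is tetravalent, the neighbours of a vertex lie in distinct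
\<open>N\<close>-orbits, so \<open>\<Gamma>\<close> covers \<open>\<Gamma>\<^sub>N\<close>: by connectedness \<open>N\<close> is the kernel of the action
on \<open>\<Gamma>\<^sub>N\<close>, and no element of \<open>G\<close> can reverse an edge of \<open>\<Gamma>\<^sub>N\<close>. Finally, the quotient of
\<open>\<Gamma>\<^sub>N\<close> by a nontrivial normal subgroup \<open>M\<close> of \<open>G/N\<close> embeds into the quotient of \<open>\<Gamma>\<close> by
the preimage of \<open>M\<close>, a normal subgroup properly containing \<open>N\<close>; by maximality that
quotient is not tetravalent, so its valency, and hence that of \<open>(\<Gamma>\<^sub>N)\<^sub>M\<close>, is at most 2.\<close>

definition perm_inv :: "'a set \<Rightarrow> ('a \<Rightarrow> 'a) \<Rightarrow> 'a \<Rightarrow> 'a" where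
  "perm_inv S g = (\<lambda>x\<in>S. inv_into S g x)"

lemma Bij_apply: "g \<in> Bij S \<Longrightarrow> x \<in> S \<Longrightarrow> g x \<in> S"
  using Bij_imp_funcset by blast

lemma Bij_eqI: "f \<in> Bij S \<Longrightarrow> g \<in> Bij S \<Longrightarrow> (\<And>x. x \<in> S \<Longrightarrow> f x = g x) \<Longrightarrow> f = g"
  by (meson Bij_imp_extensional extensionalityI)

lemma inj_on_image_Bij: "g \<in> Bij S \<Longrightarrow> inj_on (image g) (Pow S)"
  by (simp add: Bij_def bij_betw_def inj_on_image_Pow)

lemma perm_inv_Bij: "g \<in> Bij S \<Longrightarrow> perm_inv S g \<in> Bij S"
  by (simp add: perm_inv_def restrict_inv_into_Bij)

lemma perm_inv_left: "g \<in> Bij S \<Longrightarrow> x \<in> S \<Longrightarrow> perm_inv S g (g x) = x"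
  by (auto simp: perm_inv_def Bij_def bij_betw_inv_into_left bij_betw_apply)

lemma perm_inv_right: "g \<in> Bij S \<Longrightarrow> x \<in> S \<Longrightarrow> g (perm_inv S g x) = x"
  by (auto simp: perm_inv_def Bij_def bij_betw_inv_into_right)

lemma image_perm_inv_image: "g \<in> Bij S \<Longrightarrow> A \<subseteq> S \<Longrightarrow> perm_inv S g ` g ` A = A"
  by (force simp: image_image perm_inv_left)

lemma image_image_perm_inv: "g \<in> Bij S \<Longrightarrow> A \<subseteq> S \<Longrightarrow> g ` perm_inv S g ` A = A"
  by (force simp: image_image perm_inv_right)

lemma inv_BijGroup_eq: "g \<in> Bij S \<Longrightarrow> inv\<^bsub>BijGroup S\<^esub> g = perm_inv S g"
  by (simp add: inv_BijGroup perm_inv_def)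

lemma carrier_BijGroup: "carrier (BijGroup S) = Bij S"
  by (simp add: BijGroup_def)

lemma BijGroup_mult: "f \<in> Bij S \<Longrightarrow> g \<in> Bij S \<Longrightarrow> f \<otimes>\<^bsub>BijGroup S\<^esub> g = compose S f g"
  by (simp add: BijGroup_def)

lemma subgroup_BijGroup_iff:
  "subgroup N (BijGroup S) \<longleftrightarrow> N \<subseteq> Bij S \<and> (\<lambda>x\<in>S. x) \<in> N \<and>
     (\<forall>g\<in>N. \<forall>h\<in>N. compose S g h \<in> N) \<and> (\<forall>g\<in>N. perm_inv S g \<in> N)"
proof
  assume N: "subgroup N (BijGroup S)"
  have "N \<subseteq> Bij S"
    using subgroup.subset[OF N] by (simp add: BijGroup_def)
  with subgroup.one_closed[OF N] subgroup.m_closed[OF N] subgroup.m_inv_closed[OF N]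
  show "N \<subseteq> Bij S \<and> (\<lambda>x\<in>S. x) \<in> N \<and>
     (\<forall>g\<in>N. \<forall>h\<in>N. compose S g h \<in> N) \<and> (\<forall>g\<in>N. perm_inv S g \<in> N)"
    by (auto simp: BijGroup_mult inv_BijGroup_eq subset_iff) (simp add: BijGroup_def)
next
  assume "N \<subseteq> Bij S \<and> (\<lambda>x\<in>S. x) \<in> N \<and>
     (\<forall>g\<in>N. \<forall>h\<in>N. compose S g h \<in> N) \<and> (\<forall>g\<in>N. perm_inv S g \<in> N)"
  then show "subgroup N (BijGroup S)"
    by unfold_locales (auto simp: BijGroup_mult inv_BijGroup_eq subset_iff, simp_all add: BijGroup_def)
qed

lemma
  assumes "subgroup N (BijGroup S)"
  shows perm_subgroup_Bij: "g \<in> N \<Longrightarrow> g \<in> Bij S"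
    and perm_subgroup_id: "(\<lambda>x\<in>S. x) \<in> N"
    and perm_subgroup_compose: "g \<in> N \<Longrightarrow> h \<in> N \<Longrightarrow> compose S g h \<in> N"
    and perm_subgroup_inv: "g \<in> N \<Longrightarrow> perm_inv S g \<in> N"
  using assms by (auto simp: subgroup_BijGroup_iff)

lemma perm_grp_inv:
  assumes "subgroup G (BijGroup V)" and "g \<in> G"
  shows "inv\<^bsub>perm_grp V G\<^esub> g = perm_inv V g"
  using group.m_inv_consistent[OF group_BijGroup assms] perm_subgroup_Bij[OF assms]
  by (simp add: inv_BijGroup_eq)

lemma normal_perm_grp_iff:
  assumes G: "subgroup G (BijGroup V)"
  shows "N \<lhd> perm_grp V G \<longleftrightarrow> subgroup N (BijGroup V) \<and> N \<subseteq> G \<and>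
     (\<forall>g\<in>G. \<forall>n\<in>N. compose V (compose V g n) (perm_inv V g) \<in> N)"
proof -
  interpret Bij: group "BijGroup V" by (rule group_BijGroup)
  interpret P: group "perm_grp V G" by (rule subgroup.subgroup_is_group[OF G Bij.group_axioms])
  have sub: "subgroup N (perm_grp V G) \<longleftrightarrow> subgroup N (BijGroup V) \<and> N \<subseteq> G"
    using Bij.incl_subgroup[OF G] Bij.subgroup_incl[OF _ G] subgroup.subset by fastforce
  have conj: "g \<otimes>\<^bsub>perm_grp V G\<^esub> n \<otimes>\<^bsub>perm_grp V G\<^esub> inv\<^bsub>perm_grp V G\<^esub> g
      = compose V (compose V g n) (perm_inv V g)" if "g \<in> G" "n \<in> G" for g n
    using that perm_subgroup_Bij[OF G]
    by (simp add: perm_grp_inv[OF G] BijGroup_mult compose_Bij perm_inv_Bij)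
  show ?thesis
    unfolding P.normal_inv_iff sub by (auto simp: conj[symmetric] subset_iff)
qed

lemma (in group_hom) normal_vimage:
  assumes M: "M \<lhd> H\<lparr>carrier := h ` carrier G\<rparr>"
  shows "{x \<in> carrier G. h x \<in> M} \<lhd> G"
proof -
  interpret I: group "H\<lparr>carrier := h ` carrier G\<rparr>"
    by (rule subgroup.subgroup_is_group[OF img_is_subgroup H.group_axioms])
  have img_inv: "inv\<^bsub>H\<lparr>carrier := h ` carrier G\<rparr>\<^esub> (h x) = inv\<^bsub>H\<^esub> (h x)" if "x \<in> carrier G" for x
    using H.m_inv_consistent[OF img_is_subgroup] that by simp
  have MH: "subgroup M (H\<lparr>carrier := h ` carrier G\<rparr>)" and
    conj: "\<And>y m. y \<in> h ` carrier G \<Longrightarrow> m \<in> M \<Longrightarrow> y \<otimes>\<^bsub>H\<^esub> m \<otimes>\<^bsub>H\<^esub> inv\<^bsub>H\<lparr>carrier := h ` carrier G\<rparr>\<^esub> y \<in> M"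
    using M by (auto simp: I.normal_inv_iff)
  have sub: "subgroup {x \<in> carrier G. h x \<in> M} G"
  proof
    show "\<one> \<in> {x \<in> carrier G. h x \<in> M}"
      using subgroup.one_closed[OF MH] by simp
    show "x \<otimes> y \<in> {x \<in> carrier G. h x \<in> M}"
      if "x \<in> {x \<in> carrier G. h x \<in> M}" "y \<in> {x \<in> carrier G. h x \<in> M}" for x y
      using that subgroup.m_closed[OF MH] by simp
    show "inv x \<in> {x \<in> carrier G. h x \<in> M}" if "x \<in> {x \<in> carrier G. h x \<in> M}" for x
      using that subgroup.m_inv_closed[OF MH, of "h x"] img_inv[of x] by simp
  qed auto
  show ?thesis
  proof (rule G.normal_invI[OF sub])
    fix x n assume "x \<in> carrier G" "n \<in> {x \<in> carrier G. h x \<in> M}"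
    then show "x \<otimes> n \<otimes> inv x \<in> {x \<in> carrier G. h x \<in> M}"
      using conj[of "h x" "h n"] img_inv[of x] by simp
  qed
qed

section \<open>Orbits and quotient graphs\<close>

lemma orbitI: "n \<in> N \<Longrightarrow> n v \<in> orbit N v"
  unfolding orbit_def by blast

lemma orbitE: "w \<in> orbit N v \<Longrightarrow> (\<And>n. n \<in> N \<Longrightarrow> w = n v \<Longrightarrow> P) \<Longrightarrow> P"
  unfolding orbit_def by blast

lemma quot_VI: "v \<in> S \<Longrightarrow> orbit N v \<in> quot_V N S"
  unfolding quot_V_def by blast

lemma quot_VE: "A \<in> quot_V N S \<Longrightarrow> (\<And>v. v \<in> S \<Longrightarrow> A = orbit N v \<Longrightarrow> P) \<Longrightarrow> P"
  unfolding quot_V_def by blast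

context
  fixes N :: "('a \<Rightarrow> 'a) set" and S :: "'a set"
  assumes N: "subgroup N (BijGroup S)"
begin

lemma self_in_orbit: "v \<in> S \<Longrightarrow> v \<in> orbit N v"
  using orbitI[OF perm_subgroup_id[OF N], of v] by simp

lemma orbit_subset: "v \<in> S \<Longrightarrow> orbit N v \<subseteq> S"
  by (auto elim!: orbitE intro: Bij_apply perm_subgroup_Bij[OF N])

lemma orbit_eq_of_mem:
  assumes v: "v \<in> S" and w: "w \<in> orbit N v"
  shows "orbit N w = orbit N v"
proof -
  obtain n where n: "n \<in> N" "w = n v" using w by (rule orbitE)
  have nB: "n \<in> Bij S" using perm_subgroup_Bij[OF N n(1)] .
  have "m w \<in> orbit N v" if "m \<in> N" for m
    using orbitI[OF perm_subgroup_compose[OF N that n(1)], of v] n v by (simp add: compose_def)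
  moreover have "m v \<in> orbit N w" if "m \<in> N" for m
    using orbitI[OF perm_subgroup_compose[OF N that perm_subgroup_inv[OF N n(1)]], of w]
      n Bij_apply[OF nB v] by (simp add: compose_def perm_inv_left[OF nB v])
  ultimately show ?thesis
    by (auto elim!: orbitE)
qed

lemma orbit_eq_iff: "v \<in> S \<Longrightarrow> w \<in> S \<Longrightarrow> orbit N v = orbit N w \<longleftrightarrow> w \<in> orbit N v"
  using orbit_eq_of_mem self_in_orbit by metis

lemma orbit_apply: "v \<in> S \<Longrightarrow> n \<in> N \<Longrightarrow> orbit N (n v) = orbit N v"
  using orbit_eq_of_mem orbitI by metis

lemma quot_V_subset: "A \<in> quot_V N S \<Longrightarrow> A \<subseteq> S"
  using orbit_subset by (auto elim: quot_VE)

lemma quot_V_eq_orbit: "A \<in> quot_V N S \<Longrightarrow> x \<in> A \<Longrightarrow> A = orbit N x"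
  using orbit_eq_of_mem by (metis quot_VE)

end

lemma image_orbit:
  assumes G: "subgroup G (BijGroup S)" and N: "N \<lhd> perm_grp S G" and g: "g \<in> G" and v: "v \<in> S"
  shows "g ` orbit N v = orbit N (g v)"
proof -
  have NB: "subgroup N (BijGroup S)"
    and conj: "\<And>g n. g \<in> G \<Longrightarrow> n \<in> N \<Longrightarrow> compose S (compose S g n) (perm_inv S g) \<in> N"
    using N by (auto simp: normal_perm_grp_iff[OF G])
  have sub: "h ` orbit N x \<subseteq> orbit N (h x)" if h: "h \<in> G" and x: "x \<in> S" for h x
  proof
    fix y assume "y \<in> h ` orbit N x"
    then obtain n where n: "n \<in> N" "y = h (n x)" by (auto elim: orbitE)
    have hB: "h \<in> Bij S" using perm_subgroup_Bij[OF G h] .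
    have "compose S (compose S h n) (perm_inv S h) (h x) = y"
      using n x hB Bij_apply[OF hB x] by (simp add: compose_def perm_inv_left)
    then show "y \<in> orbit N (h x)" using orbitI[OF conj[OF h n(1)]] by metis
  qed
  have gB: "g \<in> Bij S" using perm_subgroup_Bij[OF G g] .
  have gv: "g v \<in> S" using Bij_apply[OF gB v] .
  have "perm_inv S g ` orbit N (g v) \<subseteq> orbit N v"
    using sub[OF perm_subgroup_inv[OF G g] gv] by (simp add: perm_inv_left[OF gB v])
  then have "orbit N (g v) \<subseteq> g ` orbit N v"
    using image_image_perm_inv[OF gB orbit_subset[OF NB gv]] by blast
  then show ?thesis using sub[OF g v] by blast
qed

lemma connected_graph_quotient:
  assumes conn: "connected_graph V E" and N: "subgroup N (BijGroup V)"
  shows "connected_graph (quot_V N V) (quot_E N V E)"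
proof -
  let ?R = "\<lambda>A B. quot_E N V E A B \<and> A \<in> quot_V N V \<and> B \<in> quot_V N V"
  have path: "?R\<^sup>*\<^sup>* (orbit N u) (orbit N x)"
    if "(\<lambda>x y. E x y \<and> x \<in> V \<and> y \<in> V)\<^sup>*\<^sup>* u x" for u x
    using that
  proof (induction rule: rtranclp_induct)
    case (step y z)
    then have yz: "E y z" "y \<in> V" "z \<in> V" by auto
    show ?case
    proof (cases "orbit N y = orbit N z")
      case False
      then have "?R (orbit N y) (orbit N z)"
        using yz self_in_orbit[OF N yz(2)] self_in_orbit[OF N yz(3)] quot_VI[OF yz(2)] quot_VI[OF yz(3)]
        unfolding quot_E_def by blast
      with step.IH show ?thesis by (rule rtranclp.rtrancl_into_rtrancl)
    qed (use step.IH in simp)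
  qed simp
  show ?thesis
    unfolding connected_graph_def
  proof (intro conjI ballI)
    show "quot_V N V \<noteq> {}" using conn by (simp add: connected_graph_def quot_V_def)
  next
    fix A B assume "A \<in> quot_V N V" "B \<in> quot_V N V"
    then obtain u w where "u \<in> V" "A = orbit N u" "w \<in> V" "B = orbit N w"
      by (metis quot_VE)
    with conn path show "?R\<^sup>*\<^sup>* A B"
      unfolding connected_graph_def by blast
  qed
qed

lemma valency_le_inj_hom:
  assumes val: "valency_le k V' E'" and inj: "inj_on f V" and into: "f ` V \<subseteq> V'"
    and hom: "\<And>x y. x \<in> V \<Longrightarrow> y \<in> V \<Longrightarrow> E x y \<Longrightarrow> E' (f x) (f y)"
  shows "valency_le k V E"
  unfolding valency_le_def
proof
  fix v assume v: "v \<in> V"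
  have fin: "finite {u \<in> V'. E' (f v) u}" and le: "card {u \<in> V'. E' (f v) u} \<le> k"
    using val into v by (auto simp: valency_le_def)
  have sub: "f ` {u \<in> V. E v u} \<subseteq> {u \<in> V'. E' (f v) u}"
    using into hom v by auto
  have inj': "inj_on f {u \<in> V. E v u}"
    using inj by (rule inj_on_subset) auto
  show "finite {u \<in> V. E v u} \<and> card {u \<in> V. E v u} \<le> k"
    using finite_imageD[OF finite_subset[OF sub fin] inj'] card_image[OF inj'] card_mono[OF fin sub] le
    by simp
qed

definition neighbours :: "'b set \<Rightarrow> ('b \<Rightarrow> 'b \<Rightarrow> bool) \<Rightarrow> 'b \<Rightarrow> 'b set" where
  "neighbours S R v = {u \<in> S. R v u}"

locale half_arc_transitive_graph =
  fixes V :: "'a set" and E :: "'a \<Rightarrow> 'a \<Rightarrow> bool" and G :: "('a \<Rightarrow> 'a) set"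
  assumes finite_V: "finite V" and graph_simple: "simple_graph V E"
    and graph_connected: "connected_graph V E" and graph_tetravalent: "tetravalent V E"
    and G_half_arc_transitive: "half_arc_transitive G V E"
begin

lemma edge_vertices: "E x y \<Longrightarrow> x \<in> V \<and> y \<in> V"
  using graph_simple by (simp add: simple_graph_def)

lemma edge_sym: "E x y \<Longrightarrow> E y x"
  using graph_simple by (simp add: simple_graph_def)

lemma edge_irrefl: "\<not> E x x"
  using graph_simple by (simp add: simple_graph_def)

lemma G_subgroup: "subgroup G (BijGroup V)"
  using G_half_arc_transitive by (simp add: half_arc_transitive_def subgroup_Aut_def)

lemma G_Bij: "g \<in> G \<Longrightarrow> g \<in> Bij V"
  using perm_subgroup_Bij[OF G_subgroup] .

lemma G_apply: "g \<in> G \<Longrightarrow> x \<in> V \<Longrightarrow> g x \<in> V"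
  using Bij_apply[OF G_Bij] .

lemma G_compose: "g \<in> G \<Longrightarrow> h \<in> G \<Longrightarrow> compose V g h \<in> G"
  using perm_subgroup_compose[OF G_subgroup] .

lemma G_inv: "g \<in> G \<Longrightarrow> perm_inv V g \<in> G"
  using perm_subgroup_inv[OF G_subgroup] .

lemma G_edge_iff: "g \<in> G \<Longrightarrow> x \<in> V \<Longrightarrow> y \<in> V \<Longrightarrow> E (g x) (g y) \<longleftrightarrow> E x y"
  using G_half_arc_transitive
  by (simp add: half_arc_transitive_def subgroup_Aut_def is_automorphism_def)

lemma G_edge: "g \<in> G \<Longrightarrow> E x y \<Longrightarrow> E (g x) (g y)"
  using G_edge_iff edge_vertices by blast

lemma G_vertex_transitive: "u \<in> V \<Longrightarrow> w \<in> V \<Longrightarrow> \<exists>g\<in>G. g u = w"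
  using G_half_arc_transitive by (simp add: half_arc_transitive_def vertex_transitive_def)

lemma G_edge_transitive:
  "E a b \<Longrightarrow> E c d \<Longrightarrow> \<exists>g\<in>G. (g a = c \<and> g b = d) \<or> (g a = d \<and> g b = c)"
  using G_half_arc_transitive unfolding half_arc_transitive_def edge_transitive_def
  by (metis doubleton_eq_iff)

lemma finite_G: "finite G"
proof (rule finite_subset)
  show "G \<subseteq> V \<rightarrow>\<^sub>E V"
    using G_apply Bij_imp_extensional[OF G_Bij] by (auto simp: PiE_def)
qed (simp add: finite_V finite_PiE)

lemma finite_neighbours: "finite (neighbours V E v)"
  using finite_V by (simp add: neighbours_def)

lemma card_neighbours: "v \<in> V \<Longrightarrow> card (neighbours V E v) = 4"
  using graph_tetravalent by (simp add: tetravalent_def neighbours_def)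

lemma ex_edge: "\<exists>u w. E u w"
proof -
  obtain v where "v \<in> V" using graph_connected by (auto simp: connected_graph_def)
  then have "neighbours V E v \<noteq> {}" using card_neighbours by fastforce
  then show ?thesis by (auto simp: neighbours_def)
qed

lemma neighbours_image:
  assumes g: "g \<in> G" and v: "v \<in> V"
  shows "neighbours V E (g v) = g ` neighbours V E v"
proof
  show "g ` neighbours V E v \<subseteq> neighbours V E (g v)"
    using G_edge[OF g] G_apply[OF g] by (auto simp: neighbours_def)
  show "neighbours V E (g v) \<subseteq> g ` neighbours V E v"
  proof
    fix y assume "y \<in> neighbours V E (g v)"
    then have y: "y \<in> V" "E (g v) y" by (auto simp: neighbours_def)
    then have "E v (perm_inv V g y)"
      using G_edge[OF G_inv[OF g] y(2)] perm_inv_left[OF G_Bij[OF g] v] by simp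
    then show "y \<in> g ` neighbours V E v"
      using perm_inv_right[OF G_Bij[OF g] y(1)] edge_vertices
      by (metis (mono_tags, lifting) image_eqI mem_Collect_eq neighbours_def)
  qed
qed

text \<open>An element of \<open>G\<close> reversing one edge would make \<open>G\<close> transitive on arcs.\<close>

lemma no_edge_reversal:
  assumes g: "g \<in> G" and e: "E u w" and gu: "g u = w" and gw: "g w = u"
  shows False
proof -
  have onto: "\<exists>p\<in>G. p a = u \<and> p b = w" if ab: "E a b" for a b
  proof -
    obtain p where p: "p \<in> G" "(p a = u \<and> p b = w) \<or> (p a = w \<and> p b = u)"
      using G_edge_transitive[OF ab e] by blast
    have "compose V g p a = g (p a)" "compose V g p b = g (p b)"
      using edge_vertices[OF ab] by (simp_all add: compose_def)
    then show ?thesis using p gu gw G_compose[OF g p(1)] by metis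
  qed
  have "arc_transitive G V E"
    unfolding arc_transitive_def
  proof (intro allI impI)
    fix a b c d assume ab: "E a b" and cd: "E c d"
    obtain p where p: "p \<in> G" "p a = u" "p b = w" using onto[OF ab] by blast
    obtain q where q: "q \<in> G" "q c = u" "q d = w" using onto[OF cd] by blast
    have "perm_inv V q u = c" "perm_inv V q w = d"
      using q edge_vertices[OF cd] perm_inv_left[OF G_Bij[OF q(1)]] by metis+
    then have "compose V (perm_inv V q) p a = c" "compose V (perm_inv V q) p b = d"
      using p edge_vertices[OF ab] by (simp_all add: compose_def)
    then show "\<exists>k\<in>G. k a = c \<and> k b = d" using G_compose[OF G_inv[OF q(1)] p(1)] by blast
  qed
  then show False using G_half_arc_transitive by (simp add: half_arc_transitive_def)
qed

lemma
  assumes "N \<lhd> perm_grp V G"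
  shows normal_subgroup_Bij: "subgroup N (BijGroup V)" and normal_subset_G: "N \<subseteq> G"
  using assms by (auto simp: normal_perm_grp_iff[OF G_subgroup])

lemma G_image_orbit: "N \<lhd> perm_grp V G \<Longrightarrow> g \<in> G \<Longrightarrow> v \<in> V \<Longrightarrow> g ` orbit N v = orbit N (g v)"
  using image_orbit[OF G_subgroup] .

lemma orbits_image:
  assumes N: "N \<lhd> perm_grp V G" and g: "g \<in> G" and Y: "Y \<subseteq> V"
  shows "orbit N ` g ` Y = image g ` orbit N ` Y"
proof -
  have "orbit N ` g ` Y = (\<lambda>y. orbit N (g y)) ` Y" by (simp add: image_image)
  also have "\<dots> = (\<lambda>y. g ` orbit N y) ` Y"
    using G_image_orbit[OF N g] Y by (intro image_cong) auto
  finally show ?thesis by (simp add: image_image)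
qed

lemma card_image_orbits:
  assumes N: "N \<lhd> perm_grp V G" and g: "g \<in> G" and Y: "Y \<subseteq> V"
  shows "card (image g ` orbit N ` Y) = card (orbit N ` Y)"
proof -
  have "orbit N ` Y \<subseteq> Pow V"
    using orbit_subset[OF normal_subgroup_Bij[OF N]] Y by auto
  then show ?thesis
    by (rule card_image[OF inj_on_subset[OF inj_on_image_Bij[OF G_Bij[OF g]]]])
qed

abbreviation quotient_neighbours :: "('a \<Rightarrow> 'a) set \<Rightarrow> 'a \<Rightarrow> 'a set set" where
  "quotient_neighbours N v \<equiv> neighbours (quot_V N V) (quot_E N V E) (orbit N v)"

lemma tetravalent_quotient_iff:
  "tetravalent (quot_V N V) (quot_E N V E) \<longleftrightarrow> (\<forall>v\<in>V. card (quotient_neighbours N v) = 4)"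
  by (simp add: tetravalent_def neighbours_def quot_V_def)

lemma valency_le_quotient_iff:
  "valency_le k (quot_V N V) (quot_E N V E) \<longleftrightarrow>
     (\<forall>v\<in>V. finite (quotient_neighbours N v) \<and> card (quotient_neighbours N v) \<le> k)"
  by (simp add: valency_le_def neighbours_def quot_V_def)

lemma quotient_neighbours_eq:
  assumes N: "N \<lhd> perm_grp V G" and v: "v \<in> V"
  shows "quotient_neighbours N v = orbit N ` neighbours V E v - {orbit N v}"
proof
  have NB: "subgroup N (BijGroup V)" using normal_subgroup_Bij[OF N] .
  show "orbit N ` neighbours V E v - {orbit N v} \<subseteq> quotient_neighbours N v"
    using v self_in_orbit[OF NB] quot_VI
    by (auto simp: neighbours_def quot_E_def)
  show "quotient_neighbours N v \<subseteq> orbit N ` neighbours V E v - {orbit N v}"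
  proof
    fix B assume "B \<in> quotient_neighbours N v"
    then have B: "B \<in> quot_V N V" "orbit N v \<noteq> B" and "\<exists>x\<in>orbit N v. \<exists>y\<in>B. E x y"
      by (auto simp: neighbours_def quot_E_def)
    then obtain x y where x: "x \<in> orbit N v" and y: "y \<in> B" and "E x y"
      by blast
    moreover obtain n where n: "n \<in> N" "x = n v" using x by (rule orbitE)
    ultimately have e: "E (n v) y" by simp
    have nG: "n \<in> G" using n(1) normal_subset_G[OF N] by blast
    have yV: "y \<in> V" using edge_vertices[OF e] by simp
    let ?y' = "perm_inv V n y"
    have "E v ?y'"
      using G_edge[OF G_inv[OF nG] e] perm_inv_left[OF G_Bij[OF nG] v] by simp
    moreover have "?y' \<in> V" using G_apply[OF G_inv[OF nG] yV] .
    moreover have "B = orbit N ?y'"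
      using orbit_apply[OF NB yV perm_subgroup_inv[OF NB n(1)]] quot_V_eq_orbit[OF NB B(1) y] by simp
    ultimately show "B \<in> orbit N ` neighbours V E v - {orbit N v}"
      using B(2) by (auto simp: neighbours_def)
  qed
qed

lemma quotient_neighbours_image:
  assumes N: "N \<lhd> perm_grp V G" and g: "g \<in> G" and v: "v \<in> V"
  shows "quotient_neighbours N (g v) = image g ` quotient_neighbours N v"
proof -
  have NB: "subgroup N (BijGroup V)" using normal_subgroup_Bij[OF N] .
  have nbs: "neighbours V E v \<subseteq> V" by (auto simp: neighbours_def)
  have "orbit N ` neighbours V E v \<union> {orbit N v} \<subseteq> Pow V"
    using orbit_subset[OF NB] nbs v by auto
  then have "image g ` (orbit N ` neighbours V E v - {orbit N v})
      = image g ` orbit N ` neighbours V E v - image g ` {orbit N v}"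
    by (meson Diff_subset inj_on_image_Bij[OF G_Bij[OF g]] inj_on_image_set_diff le_supE order_trans)
  then show ?thesis
    using quotient_neighbours_eq[OF N] G_apply[OF g v] v neighbours_image[OF g v]
      orbits_image[OF N g nbs] G_image_orbit[OF N g v] by simp
qed

lemma card_quotient_neighbours_image:
  assumes N: "N \<lhd> perm_grp V G" and g: "g \<in> G" and v: "v \<in> V"
  shows "card (quotient_neighbours N (g v)) = card (quotient_neighbours N v)"
proof -
  have "quotient_neighbours N v \<subseteq> Pow V"
    using quotient_neighbours_eq[OF N v] orbit_subset[OF normal_subgroup_Bij[OF N]]
    by (auto simp: neighbours_def)
  then have "inj_on (image g) (quotient_neighbours N v)"
    by (rule inj_on_subset[OF inj_on_image_Bij[OF G_Bij[OF g]]])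
  then show ?thesis
    using quotient_neighbours_image[OF assms] by (simp add: card_image)
qed

lemma
  assumes N: "N \<lhd> perm_grp V G" and v: "v \<in> V" and four: "card (quotient_neighbours N v) = 4"
  shows inj_on_orbit_neighbours: "inj_on (orbit N) (neighbours V E v)"
    and orbit_neighbour_ne: "u \<in> neighbours V E v \<Longrightarrow> orbit N u \<noteq> orbit N v"
proof -
  let ?A = "orbit N ` neighbours V E v"
  have fin: "finite ?A" using finite_neighbours by simp
  have le: "card ?A \<le> 4"
    using card_image_le[OF finite_neighbours, of "orbit N" v] card_neighbours[OF v] by linarith
  have diff: "card (?A - {orbit N v}) = 4"
    using four quotient_neighbours_eq[OF N v] by argo
  have notin: "orbit N v \<notin> ?A"
  proof
    assume "orbit N v \<in> ?A"
    then have "card (?A - {orbit N v}) = card ?A - 1" using fin by (simp add: card_Diff_singleton)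
    then show False using le diff by linarith
  qed
  then have "card ?A = 4" using diff by simp
  then show "inj_on (orbit N) (neighbours V E v)"
    using card_neighbours[OF v] by (intro eq_card_imp_inj_on[OF finite_neighbours]) simp
  show "orbit N u \<noteq> orbit N v" if "u \<in> neighbours V E v"
    using that notin by blast
qed

lemma normal_trivial: "{\<lambda>x\<in>V. x} \<lhd> perm_grp V G"
  using group.one_is_normal[OF subgroup.subgroup_is_group[OF G_subgroup group_BijGroup]]
  by (simp add: BijGroup_def)

lemma tetravalent_trivial_quotient: "tetravalent (quot_V {\<lambda>x\<in>V. x} V) (quot_E {\<lambda>x\<in>V. x} V E)"
  unfolding tetravalent_quotient_iff
proof
  fix v assume v: "v \<in> V"
  have singleton: "orbit {\<lambda>x\<in>V. x} x = {x}" if "x \<in> V" for x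
    using that by (simp add: orbit_def)
  have "orbit {\<lambda>x\<in>V. x} ` neighbours V E v = (\<lambda>x. {x}) ` neighbours V E v"
    by (rule image_cong) (auto simp: neighbours_def singleton)
  then have "quotient_neighbours {\<lambda>x\<in>V. x} v = (\<lambda>x. {x}) ` neighbours V E v - {{v}}"
    using quotient_neighbours_eq[OF normal_trivial v] singleton[OF v] by simp
  also have "\<dots> = (\<lambda>x. {x}) ` neighbours V E v"
    using edge_irrefl by (auto simp: neighbours_def)
  finally show "card (quotient_neighbours {\<lambda>x\<in>V. x} v) = 4"
    using card_neighbours[OF v] by (simp add: card_image)
qed

end

section \<open>The dichotomy for normal quotients\<close>

lemma regular_relation_degrees_eq:
  assumes W: "finite W" "W \<noteq> {}" and Q: "Q \<subseteq> W \<times> W"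
    and out: "\<And>A. A \<in> W \<Longrightarrow> card {B. (A, B) \<in> Q} = a"
    and inn: "\<And>B. B \<in> W \<Longrightarrow> card {A. (A, B) \<in> Q} = b"
  shows "a = b"
proof -
  have "{B. (A, B) \<in> Q} \<subseteq> W" "{B. (B, A) \<in> Q} \<subseteq> W" for A
    using Q by auto
  then have fin: "finite {B. (A, B) \<in> Q}" "finite {B. (B, A) \<in> Q}" for A
    using W(1) finite_subset by metis+
  have "Q = Sigma W (\<lambda>A. {B. (A, B) \<in> Q})" "Q\<inverse> = Sigma W (\<lambda>B. {A. (A, B) \<in> Q})"
    using Q by auto
  then have "card Q = (\<Sum>A\<in>W. card {B. (A, B) \<in> Q})" "card Q = (\<Sum>B\<in>W. card {A. (A, B) \<in> Q})"
    using card_SigmaI[OF W(1)] fin card_inverse[of Q] by metis+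
  then have "card Q = card W * a" "card Q = card W * b"
    using out inn by simp_all
  then show ?thesis using W by simp
qed

text \<open>Half-arc-transitivity orients the edges: the arcs in the \<open>G\<close>-orbit of a fixed
arc \<open>(v0, a0)\<close> contain exactly one of the two arcs of each edge.\<close>

locale oriented_half_arc_transitive_graph = half_arc_transitive_graph +
  fixes v0 a0 :: 'a
  assumes reference_edge: "E v0 a0"
begin

definition arc :: "'a \<Rightarrow> 'a \<Rightarrow> bool" where
  "arc x y \<longleftrightarrow> (\<exists>g\<in>G. g v0 = x \<and> g a0 = y)"

definition out_neighbours :: "'a \<Rightarrow> 'a set" where
  "out_neighbours v = {a. arc v a}"

definition in_neighbours :: "'a \<Rightarrow> 'a set" where
  "in_neighbours v = {b. arc b v}"

lemma arc_edge: "arc x y \<Longrightarrow> E x y"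
  unfolding arc_def using G_edge[OF _ reference_edge] by blast

lemma arc_vertices: "arc x y \<Longrightarrow> x \<in> V \<and> y \<in> V"
  using arc_edge edge_vertices by blast

lemma edge_arc: "E x y \<Longrightarrow> arc x y \<or> arc y x"
  unfolding arc_def by (metis G_edge_transitive[OF reference_edge])

lemma arc_image:
  assumes g: "g \<in> G" and "arc x y"
  shows "arc (g x) (g y)"
proof -
  obtain h where h: "h \<in> G" "h v0 = x" "h a0 = y" using assms(2) by (auto simp: arc_def)
  have "compose V g h v0 = g x" "compose V g h a0 = g y"
    using h edge_vertices[OF reference_edge] by (simp_all add: compose_def)
  then show ?thesis using G_compose[OF g h(1)] by (auto simp: arc_def)
qed

lemma arc_image_inv:
  assumes g: "g \<in> G" and "arc (g x) (g y)" and "x \<in> V" "y \<in> V"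
  shows "arc x y"
  using arc_image[OF G_inv[OF g] assms(2)] perm_inv_left[OF G_Bij[OF g]] assms(3,4) by simp

lemma arcs_transitive:
  assumes "arc x y" "arc x' y'"
  shows "\<exists>g\<in>G. g x = x' \<and> g y = y'"
proof -
  obtain h where h: "h \<in> G" "h v0 = x" "h a0 = y" using assms(1) by (auto simp: arc_def)
  obtain h' where h': "h' \<in> G" "h' v0 = x'" "h' a0 = y'" using assms(2) by (auto simp: arc_def)
  have "perm_inv V h x = v0" "perm_inv V h y = a0"
    using h perm_inv_left[OF G_Bij[OF h(1)]] edge_vertices[OF reference_edge] by auto
  then have "compose V h' (perm_inv V h) x = x'" "compose V h' (perm_inv V h) y = y'"
    using h' arc_vertices[OF assms(1)] by (simp_all add: compose_def)
  then show ?thesis using G_compose[OF h'(1) G_inv[OF h(1)]] by blast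
qed

lemma arc_asym: "arc x y \<Longrightarrow> arc y x \<Longrightarrow> False"
  using arcs_transitive no_edge_reversal arc_edge by metis

lemma neighbours_out_in: "neighbours V E v = out_neighbours v \<union> in_neighbours v"
  using edge_arc arc_edge arc_vertices edge_sym edge_vertices
  by (auto simp: neighbours_def out_neighbours_def in_neighbours_def)

lemma out_in_disjoint: "out_neighbours v \<inter> in_neighbours v = {}"
  using arc_asym by (auto simp: out_neighbours_def in_neighbours_def)

lemma out_neighbours_subset: "out_neighbours v \<subseteq> V"
  and in_neighbours_subset: "in_neighbours v \<subseteq> V"
  using arc_vertices by (auto simp: out_neighbours_def in_neighbours_def)

lemma finite_out_neighbours: "finite (out_neighbours v)"
  and finite_in_neighbours: "finite (in_neighbours v)"
  using finite_neighbours[of v] neighbours_out_in[of v] by auto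

lemma out_neighbours_image:
  assumes g: "g \<in> G" and v: "v \<in> V"
  shows "out_neighbours (g v) = g ` out_neighbours v"
proof
  show "g ` out_neighbours v \<subseteq> out_neighbours (g v)"
    using arc_image[OF g] by (auto simp: out_neighbours_def)
  show "out_neighbours (g v) \<subseteq> g ` out_neighbours v"
  proof
    fix y assume "y \<in> out_neighbours (g v)"
    then have y: "arc (g v) y" "y \<in> V" using arc_vertices by (auto simp: out_neighbours_def)
    let ?x = "perm_inv V g y"
    have x: "?x \<in> V" "g ?x = y"
      using G_apply[OF G_inv[OF g] y(2)] perm_inv_right[OF G_Bij[OF g] y(2)] by auto
    then have "arc v ?x" using arc_image_inv[OF g _ v x(1)] y(1) by simp
    then show "y \<in> g ` out_neighbours v" using x(2) by (force simp: out_neighbours_def)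
  qed
qed

lemma in_neighbours_image:
  assumes g: "g \<in> G" and v: "v \<in> V"
  shows "in_neighbours (g v) = g ` in_neighbours v"
proof
  show "g ` in_neighbours v \<subseteq> in_neighbours (g v)"
    using arc_image[OF g] by (auto simp: in_neighbours_def)
  show "in_neighbours (g v) \<subseteq> g ` in_neighbours v"
  proof
    fix y assume "y \<in> in_neighbours (g v)"
    then have y: "arc y (g v)" "y \<in> V" using arc_vertices by (auto simp: in_neighbours_def)
    let ?x = "perm_inv V g y"
    have x: "?x \<in> V" "g ?x = y"
      using G_apply[OF G_inv[OF g] y(2)] perm_inv_right[OF G_Bij[OF g] y(2)] by auto
    then have "arc ?x v" using arc_image_inv[OF g _ x(1) v] y(1) by simp
    then show "y \<in> g ` in_neighbours v" using x(2) by (force simp: in_neighbours_def)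
  qed
qed

context
  fixes N assumes N: "N \<lhd> perm_grp V G"
begin

abbreviation out_orbits :: "'a \<Rightarrow> 'a set set" where
  "out_orbits v \<equiv> orbit N ` out_neighbours v"

abbreviation in_orbits :: "'a \<Rightarrow> 'a set set" where
  "in_orbits v \<equiv> orbit N ` in_neighbours v"

lemma card_out_orbits_image:
  assumes g: "g \<in> G" and v: "v \<in> V"
  shows "card (out_orbits (g v)) = card (out_orbits v)"
  using out_neighbours_image[OF g v] orbits_image[OF N g out_neighbours_subset]
    card_image_orbits[OF N g out_neighbours_subset] by simp

lemma card_in_orbits_image:
  assumes g: "g \<in> G" and v: "v \<in> V"
  shows "card (in_orbits (g v)) = card (in_orbits v)"
  using in_neighbours_image[OF g v] orbits_image[OF N g in_neighbours_subset]
    card_image_orbits[OF N g in_neighbours_subset] by simp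

text \<open>The \<open>N\<close>-images of the arcs form a relation on the quotient whose out- and in-degrees
are the numbers of out- and in-orbits; both are constant by vertex-transitivity, so
double counting makes them equal.\<close>

lemma quotient_arcs_from:
  assumes u: "u \<in> V"
  shows "{B. (orbit N u, B) \<in> {(orbit N x, orbit N y) | x y. arc x y}} = out_orbits u"
proof
  have NB: "subgroup N (BijGroup V)" using normal_subgroup_Bij[OF N] .
  show "{B. (orbit N u, B) \<in> {(orbit N x, orbit N y) | x y. arc x y}} \<subseteq> out_orbits u"
  proof
    fix B assume "B \<in> {B. (orbit N u, B) \<in> {(orbit N x, orbit N y) | x y. arc x y}}"
    then obtain x y where xy: "orbit N u = orbit N x" "B = orbit N y" "arc x y" by blast
    have xV: "x \<in> V" and yV: "y \<in> V" using arc_vertices[OF xy(3)] by auto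
    obtain n where n: "n \<in> N" "u = n x"
      using orbit_eq_iff[OF NB xV u] xy(1) by (auto elim: orbitE)
    have "arc u (n y)" using arc_image[OF subsetD[OF normal_subset_G[OF N] n(1)] xy(3)] n(2) by simp
    moreover have "B = orbit N (n y)" using orbit_apply[OF NB yV n(1)] xy(2) by simp
    ultimately show "B \<in> out_orbits u" by (auto simp: out_neighbours_def)
  qed
qed (auto simp: out_neighbours_def)

lemma quotient_arcs_to:
  assumes u: "u \<in> V"
  shows "{A. (A, orbit N u) \<in> {(orbit N x, orbit N y) | x y. arc x y}} = in_orbits u"
proof
  have NB: "subgroup N (BijGroup V)" using normal_subgroup_Bij[OF N] .
  show "{A. (A, orbit N u) \<in> {(orbit N x, orbit N y) | x y. arc x y}} \<subseteq> in_orbits u"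
  proof
    fix A assume "A \<in> {A. (A, orbit N u) \<in> {(orbit N x, orbit N y) | x y. arc x y}}"
    then obtain x y where xy: "orbit N u = orbit N y" "A = orbit N x" "arc x y" by blast
    have xV: "x \<in> V" and yV: "y \<in> V" using arc_vertices[OF xy(3)] by auto
    obtain n where n: "n \<in> N" "u = n y"
      using orbit_eq_iff[OF NB yV u] xy(1) by (auto elim: orbitE)
    have "arc (n x) u" using arc_image[OF subsetD[OF normal_subset_G[OF N] n(1)] xy(3)] n(2) by simp
    moreover have "A = orbit N (n x)" using orbit_apply[OF NB xV n(1)] xy(2) by simp
    ultimately show "A \<in> in_orbits u" by (auto simp: in_neighbours_def)
  qed
qed (auto simp: in_neighbours_def)

lemma card_out_orbits_eq_in_orbits:
  assumes v: "v \<in> V"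
  shows "card (out_orbits v) = card (in_orbits v)"
proof -
  have const: "card (out_orbits u) = card (out_orbits v)" "card (in_orbits u) = card (in_orbits v)"
    if "u \<in> V" for u
    using G_vertex_transitive[OF v that] card_out_orbits_image card_in_orbits_image v by metis+
  show ?thesis
  proof (rule regular_relation_degrees_eq)
    show "finite (quot_V N V)" "quot_V N V \<noteq> {}"
      using finite_V v by (auto simp: quot_V_def)
    show "{(orbit N x, orbit N y) | x y. arc x y} \<subseteq> quot_V N V \<times> quot_V N V"
      using arc_vertices by (blast intro: quot_VI)
  next
    fix A assume "A \<in> quot_V N V"
    then obtain u where "u \<in> V" "A = orbit N u" by (rule quot_VE)
    then show "card {B. (A, B) \<in> {(orbit N x, orbit N y) | x y. arc x y}} = card (out_orbits v)"
      using quotient_arcs_from const by simp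
  next
    fix B assume "B \<in> quot_V N V"
    then obtain u where "u \<in> V" "B = orbit N u" by (rule quot_VE)
    then show "card {A. (A, B) \<in> {(orbit N x, orbit N y) | x y. arc x y}} = card (in_orbits v)"
      using quotient_arcs_to const by simp
  qed
qed

lemma card_out_orbits_le:
  assumes v: "v \<in> V"
  shows "card (out_orbits v) \<le> 2"
proof -
  have "card (out_neighbours v) + card (in_neighbours v) = 4"
    using card_Un_disjoint[OF finite_out_neighbours finite_in_neighbours out_in_disjoint]
      neighbours_out_in[of v] card_neighbours[OF v] by simp
  then show ?thesis
    using card_image_le[OF finite_out_neighbours, of "orbit N" v]
      card_image_le[OF finite_in_neighbours, of "orbit N" v] card_out_orbits_eq_in_orbits[OF v]
    by linarith
qed

lemma stabiliser_transitive_on_orbits: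
  assumes "A \<in> out_orbits v \<and> B \<in> out_orbits v \<or> A \<in> in_orbits v \<and> B \<in> in_orbits v"
  shows "\<exists>g\<in>G. g v = v \<and> g ` A = B"
proof -
  obtain a b where ab: "A = orbit N a" "B = orbit N b"
    and arcs: "arc v a \<and> arc v b \<or> arc a v \<and> arc b v"
    using assms unfolding out_neighbours_def in_neighbours_def by blast
  from arcs obtain g where g: "g \<in> G" "g v = v" "g a = b"
    using arcs_transitive by metis
  moreover have "a \<in> V" using arcs arc_vertices by blast
  ultimately show ?thesis using ab G_image_orbit[OF N g(1)] by auto
qed

lemma stabiliser_preserves_orbits:
  assumes g: "g \<in> G" "g v = v" and v: "v \<in> V"
  shows "image g ` out_orbits v = out_orbits v" and "image g ` in_orbits v = in_orbits v"
proof -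
  have "image g ` out_orbits v = out_orbits (g v)" "image g ` in_orbits v = in_orbits (g v)"
    using out_neighbours_image[OF g(1) v] in_neighbours_image[OF g(1) v]
      orbits_image[OF N g(1) out_neighbours_subset] orbits_image[OF N g(1) in_neighbours_subset]
    by simp_all
  then show "image g ` out_orbits v = out_orbits v" "image g ` in_orbits v = in_orbits v"
    using g(2) by simp_all
qed

text \<open>The stabiliser of \<open>v\<close> is transitive on the out-orbits and on the in-orbits and fixes
the orbit of \<open>v\<close>, so two of these three sets of orbits that meet are nested.\<close>

lemma orbit_sets_nested:
  assumes v: "v \<in> V"
    and Xs: "Xs \<in> {out_orbits v, in_orbits v}" and Ys: "Ys \<in> {out_orbits v, in_orbits v, {orbit N v}}"
    and meet: "Xs \<inter> Ys \<noteq> {}"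
  shows "Xs \<subseteq> Ys"
proof
  fix B assume B: "B \<in> Xs"
  obtain A where A: "A \<in> Xs" "A \<in> Ys" using meet by blast
  then obtain g where g: "g \<in> G" "g v = v" "g ` A = B"
    using stabiliser_transitive_on_orbits[of A v B] Xs B by auto
  have "g ` orbit N v = orbit N v" using G_image_orbit[OF N g(1) v] g(2) by simp
  consider "Ys = out_orbits v" | "Ys = in_orbits v" | "Ys = {orbit N v}" using Ys by blast
  then have "image g ` Ys = Ys"
    using stabiliser_preserves_orbits[OF g(1,2) v] \<open>g ` orbit N v = orbit N v\<close> by cases simp_all
  then show "B \<in> Ys" using A(2) g(3) by blast
qed

text \<open>Hence the quotient neighbourhood either lies inside the out-orbits or the in-orbits, or
is their disjoint union, of size twice the number of out-orbits.\<close>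

lemma card_quotient_neighbours_cases:
  assumes v: "v \<in> V"
  shows "card (quotient_neighbours N v) \<le> 2 \<or> card (quotient_neighbours N v) = 4"
proof -
  define Out In Z where "Out = out_orbits v" and "In = in_orbits v" and "Z = orbit N v"
  have q: "quotient_neighbours N v = (Out \<union> In) - {Z}"
    using quotient_neighbours_eq[OF N v] neighbours_out_in[of v] by (simp add: Out_def In_def Z_def image_Un)
  have fin: "finite Out" "finite In"
    using finite_out_neighbours finite_in_neighbours by (simp_all add: Out_def In_def)
  have card: "card In = card Out" "card Out \<le> 2"
    using card_out_orbits_eq_in_orbits[OF v] card_out_orbits_le[OF v] by (simp_all add: Out_def In_def)
  show ?thesis
  proof (cases "Out \<inter> In = {} \<and> Z \<notin> Out \<union> In")
    case True
    then have "card (quotient_neighbours N v) = card Out + card In"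
      using q fin card_Un_disjoint[OF fin] by simp
    then show ?thesis using card by presburger
  next
    case False
    then have "Out \<subseteq> In \<and> In \<subseteq> Out \<or> Out \<subseteq> {Z} \<or> In \<subseteq> {Z}"
      using orbit_sets_nested[OF v] unfolding Out_def In_def Z_def by blast
    then have "quotient_neighbours N v \<subseteq> Out \<or> quotient_neighbours N v \<subseteq> In"
      using q by blast
    then have "card (quotient_neighbours N v) \<le> card Out"
      using card_mono fin card by metis
    then show ?thesis using card by linarith
  qed
qed

end

end

context half_arc_transitive_graph
begin

lemma normal_quotient_dichotomy:
  assumes N: "N \<lhd> perm_grp V G"
  shows "valency_le 2 (quot_V N V) (quot_E N V E) \<or> tetravalent (quot_V N V) (quot_E N V E)"
proof -
  obtain v0 a0 where e: "E v0 a0" using ex_edge by blast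
  interpret oriented_half_arc_transitive_graph V E G v0 a0
    by unfold_locales (rule e)
  have v0: "v0 \<in> V" using edge_vertices[OF e] by blast
  have "card (quotient_neighbours N v) = card (quotient_neighbours N v0)" if "v \<in> V" for v
    using G_vertex_transitive[OF v0 that] card_quotient_neighbours_image[OF N _ v0] by metis
  moreover have "finite (quotient_neighbours N v)" if "v \<in> V" for v
    using quotient_neighbours_eq[OF N that] finite_neighbours by simp
  ultimately show ?thesis
    using card_quotient_neighbours_cases[OF N v0]
    unfolding valency_le_quotient_iff tetravalent_quotient_iff by auto
qed

end

section \<open>The structure of a normal quotient\<close>

locale normal_quotient = half_arc_transitive_graph +
  fixes N :: "('a \<Rightarrow> 'a) set"
  assumes N_normal: "N \<lhd> perm_grp V G"
begin

lemma N_subgroup: "subgroup N (BijGroup V)"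
  using normal_subgroup_Bij[OF N_normal] .

lemma N_subset_G: "N \<subseteq> G"
  using normal_subset_G[OF N_normal] .

lemma quotient_connected: "connected_graph (quot_V N V) (quot_E N V E)"
  using connected_graph_quotient[OF graph_connected N_subgroup] .

lemma induced_perm_orbit:
  assumes "g \<in> G" "v \<in> V"
  shows "induced_perm N V g (orbit N v) = orbit N (g v)"
  using G_image_orbit[OF N_normal assms] quot_VI[OF assms(2)] by (simp add: induced_perm_def)

lemma image_quot_V:
  assumes g: "g \<in> G" and A: "A \<in> quot_V N V"
  shows "g ` A \<in> quot_V N V"
proof -
  obtain v where v: "v \<in> V" "A = orbit N v" using A by (rule quot_VE)
  then show ?thesis using G_image_orbit[OF N_normal g v(1)] quot_VI[OF G_apply[OF g v(1)]] by simp
qed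

lemma quot_V_Pow: "quot_V N V \<subseteq> Pow V"
  using quot_V_subset[OF N_subgroup] by blast

lemma inj_on_image_quot_V: "g \<in> G \<Longrightarrow> inj_on (image g) (quot_V N V)"
  using inj_on_subset[OF inj_on_image_Bij[OF G_Bij] quot_V_Pow] .

lemma induced_perm_Bij:
  assumes g: "g \<in> G"
  shows "induced_perm N V g \<in> Bij (quot_V N V)"
proof -
  have "quot_V N V \<subseteq> image g ` quot_V N V"
  proof
    fix A assume A: "A \<in> quot_V N V"
    then have "A = g ` perm_inv V g ` A"
      using image_image_perm_inv[OF G_Bij[OF g] quot_V_subset[OF N_subgroup A]] by simp
    then show "A \<in> image g ` quot_V N V" using image_quot_V[OF G_inv[OF g] A] by blast
  qed
  then have "bij_betw (image g) (quot_V N V) (quot_V N V)"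
    using inj_on_image_quot_V[OF g] image_quot_V[OF g] by (auto simp: bij_betw_def)
  then have "bij_betw (induced_perm N V g) (quot_V N V) (quot_V N V)"
    by (rule bij_betw_cong[THEN iffD2, rotated]) (simp add: induced_perm_def)
  then show ?thesis
    by (simp add: Bij_def induced_perm_def)
qed

lemma induced_perm_hom:
  "group_hom (perm_grp V G) (BijGroup (quot_V N V)) (induced_perm N V)"
proof -
  have "induced_perm N V (compose V g h) = compose (quot_V N V) (induced_perm N V g) (induced_perm N V h)"
    if g: "g \<in> G" and h: "h \<in> G" for g h
  proof (rule extensionalityI[OF _ compose_extensional])
    show "induced_perm N V (compose V g h) \<in> extensional (quot_V N V)"
      by (simp add: induced_perm_def)
    fix A assume A: "A \<in> quot_V N V"
    then have "compose V g h ` A = g ` h ` A"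
      using quot_V_subset[OF N_subgroup A] by (force simp: compose_def)
    then show "induced_perm N V (compose V g h) A = compose (quot_V N V) (induced_perm N V g) (induced_perm N V h) A"
      using A image_quot_V[OF h A] by (simp add: induced_perm_def compose_def)
  qed
  then show ?thesis
    unfolding group_hom_def group_hom_axioms_def hom_def
    using subgroup.subgroup_is_group[OF G_subgroup group_BijGroup] group_BijGroup
      induced_perm_Bij G_Bij by (auto simp: BijGroup_mult carrier_BijGroup)
qed

lemma induced_group_subgroup: "subgroup (induced_group G N V) (BijGroup (quot_V N V))"
  using group_hom.img_is_subgroup[OF induced_perm_hom] by (simp add: induced_group_def)

lemma N_subset_action_kernel: "N \<subseteq> action_kernel G N V"
proof
  fix n assume n: "n \<in> N"
  have "n ` A = A" if A: "A \<in> quot_V N V" for A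
  proof -
    obtain v where "v \<in> V" "A = orbit N v" using A by (rule quot_VE)
    then show ?thesis
      using G_image_orbit[OF N_normal subsetD[OF N_subset_G n]] orbit_apply[OF N_subgroup _ n] by simp
  qed
  then show "n \<in> action_kernel G N V"
    using n N_subset_G by (auto simp: action_kernel_def induced_perm_def intro!: restrict_ext)
qed

lemma quot_E_image:
  assumes g: "g \<in> G" and AB: "quot_E N V E A B"
  shows "quot_E N V E (g ` A) (g ` B)"
proof -
  obtain x y where A: "A \<in> quot_V N V" and B: "B \<in> quot_V N V" and "A \<noteq> B"
    and "x \<in> A" "y \<in> B" "E x y"
    using AB by (auto simp: quot_E_def)
  moreover have "g ` A \<noteq> g ` B"
    using \<open>A \<noteq> B\<close> inj_onD[OF inj_on_image_quot_V[OF g] _ A B] by blast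
  ultimately show ?thesis
    unfolding quot_E_def using image_quot_V[OF g] G_edge[OF g] by blast
qed

lemma induced_perm_automorphism:
  assumes g: "g \<in> G"
  shows "is_automorphism (quot_V N V) (quot_E N V E) (induced_perm N V g)"
proof -
  have "quot_E N V E (g ` A) (g ` B) \<Longrightarrow> quot_E N V E A B"
    if "A \<in> quot_V N V" "B \<in> quot_V N V" for A B
    using quot_E_image[OF G_inv[OF g], of "g ` A" "g ` B"] that
      image_perm_inv_image[OF G_Bij[OF g] quot_V_subset[OF N_subgroup]] by simp
  then show ?thesis
    using quot_E_image[OF g] induced_perm_Bij[OF g]
    by (auto simp: is_automorphism_def induced_perm_def)
qed

lemma quotient_subgroup_Aut:
  "subgroup_Aut (induced_group G N V) (quot_V N V) (quot_E N V E)"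
  using induced_group_subgroup induced_perm_automorphism
  by (auto simp: subgroup_Aut_def induced_group_def)

lemma quotient_vertex_transitive: "vertex_transitive (induced_group G N V) (quot_V N V)"
  unfolding vertex_transitive_def
proof (intro ballI)
  fix A B assume A: "A \<in> quot_V N V" and B: "B \<in> quot_V N V"
  obtain u where u: "u \<in> V" "A = orbit N u" using A by (rule quot_VE)
  obtain w where w: "w \<in> V" "B = orbit N w" using B by (rule quot_VE)
  obtain g where g: "g \<in> G" "g u = w" using G_vertex_transitive[OF u(1) w(1)] by blast
  then have "induced_perm N V g A = B" using induced_perm_orbit u w by simp
  then show "\<exists>h\<in>induced_group G N V. h A = B" using g(1) by (auto simp: induced_group_def)
qed

lemma quotient_edge_transitive: "edge_transitive (induced_group G N V) (quot_V N V) (quot_E N V E)"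
  unfolding edge_transitive_def
proof (intro allI impI)
  fix A B C D assume AB: "quot_E N V E A B" and CD: "quot_E N V E C D"
  obtain x y where xy: "x \<in> A" "y \<in> B" "E x y" and "A \<in> quot_V N V" "B \<in> quot_V N V"
    using AB by (auto simp: quot_E_def)
  then have A: "A = orbit N x" and B: "B = orbit N y"
    using quot_V_eq_orbit[OF N_subgroup] by auto
  obtain x' y' where xy': "x' \<in> C" "y' \<in> D" "E x' y'" and "C \<in> quot_V N V" "D \<in> quot_V N V"
    using CD by (auto simp: quot_E_def)
  then have C: "C = orbit N x'" and D: "D = orbit N y'"
    using quot_V_eq_orbit[OF N_subgroup] by auto
  obtain g where g: "g \<in> G" "(g x = x' \<and> g y = y') \<or> (g x = y' \<and> g y = x')"
    using G_edge_transitive[OF xy(3) xy'(3)] by blast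
  have "{induced_perm N V g A, induced_perm N V g B} = {C, D}"
    using g induced_perm_orbit edge_vertices[OF xy(3)] A B C D by auto
  then show "\<exists>h\<in>induced_group G N V. {h A, h B} = {C, D}"
    using g(1) by (auto simp: induced_group_def)
qed

definition preimage :: "('a set \<Rightarrow> 'a set) set \<Rightarrow> ('a \<Rightarrow> 'a) set" where
  "preimage M = {g \<in> G. induced_perm N V g \<in> M}"

context
  fixes M assumes M_normal: "M \<lhd> perm_grp (quot_V N V) (induced_group G N V)"
begin

lemma M_subgroup: "subgroup M (BijGroup (quot_V N V))"
  and M_subset: "M \<subseteq> induced_group G N V"
  using M_normal by (auto simp: normal_perm_grp_iff[OF induced_group_subgroup])

lemma preimage_normal: "preimage M \<lhd> perm_grp V G"
  using group_hom.normal_vimage[OF induced_perm_hom] M_normal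
  by (simp add: preimage_def induced_group_def)

lemma N_subset_preimage: "N \<subseteq> preimage M"
  using N_subset_action_kernel perm_subgroup_id[OF M_subgroup]
  by (auto simp: preimage_def action_kernel_def)

lemma card_less_preimage:
  assumes nontrivial: "M \<noteq> {\<lambda>A\<in>quot_V N V. A}"
  shows "card N < card (preimage M)"
proof -
  obtain m where m: "m \<in> M" "m \<noteq> (\<lambda>A\<in>quot_V N V. A)"
    using nontrivial perm_subgroup_id[OF M_subgroup] by blast
  then obtain g where g: "g \<in> G" "m = induced_perm N V g"
    using M_subset by (auto simp: induced_group_def)
  then have "g \<in> preimage M - N"
    using m N_subset_action_kernel by (auto simp: preimage_def action_kernel_def)
  then have "N \<subset> preimage M" using N_subset_preimage by blast
  moreover have "finite (preimage M)" using finite_G by (simp add: preimage_def)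
  ultimately show ?thesis by (rule psubset_card_mono[rotated])
qed

lemma Union_orbit_orbit:
  assumes v: "v \<in> V"
  shows "\<Union> (orbit M (orbit N v)) = orbit (preimage M) v"
proof
  have P: "subgroup (preimage M) (BijGroup V)" using normal_subgroup_Bij[OF preimage_normal] .
  show "\<Union> (orbit M (orbit N v)) \<subseteq> orbit (preimage M) v"
  proof
    fix z assume "z \<in> \<Union> (orbit M (orbit N v))"
    then obtain m where m: "m \<in> M" "z \<in> m (orbit N v)" by (auto simp: orbit_def)
    then obtain g where g: "g \<in> G" "m = induced_perm N V g"
      using M_subset by (auto simp: induced_group_def)
    then have gP: "g \<in> preimage M" using m(1) by (simp add: preimage_def)
    obtain n where n: "n \<in> N" "z = n (g v)"
      using m(2) g induced_perm_orbit[OF g(1) v] by (auto elim: orbitE)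
    have "compose V n g \<in> preimage M"
      using perm_subgroup_compose[OF P subsetD[OF N_subset_preimage n(1)] gP] .
    moreover have "compose V n g v = z" using n(2) v by (simp add: compose_def)
    ultimately show "z \<in> orbit (preimage M) v" by (metis orbitI)
  qed
  show "orbit (preimage M) v \<subseteq> \<Union> (orbit M (orbit N v))"
  proof
    fix z assume "z \<in> orbit (preimage M) v"
    then obtain g where g: "g \<in> G" "induced_perm N V g \<in> M" "z = g v"
      by (auto simp: preimage_def elim: orbitE)
    then have "orbit N (g v) \<in> orbit M (orbit N v)"
      using orbitI[OF g(2)] induced_perm_orbit[OF g(1) v] by metis
    moreover have "z \<in> orbit N (g v)" using g(3) self_in_orbit[OF N_subgroup G_apply[OF g(1) v]] by simp
    ultimately show "z \<in> \<Union> (orbit M (orbit N v))" by blast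
  qed
qed

lemma quot_V_quot_VE:
  assumes "B \<in> quot_V M (quot_V N V)"
  obtains v where "v \<in> V" "B = orbit M (orbit N v)" "\<Union>B = orbit (preimage M) v"
proof -
  obtain A where A: "A \<in> quot_V N V" "B = orbit M A" using assms by (rule quot_VE)
  obtain v where "v \<in> V" "A = orbit N v" using A(1) by (rule quot_VE)
  with A(2) show ?thesis using Union_orbit_orbit that by simp
qed

lemma Union_quot_V: "B \<in> quot_V M (quot_V N V) \<Longrightarrow> \<Union>B \<in> quot_V (preimage M) V"
  by (metis quot_V_quot_VE quot_VI)

lemma inj_on_Union_quot_V: "inj_on Union (quot_V M (quot_V N V))"
proof (rule inj_onI)
  fix B1 B2 assume B1: "B1 \<in> quot_V M (quot_V N V)" and B2: "B2 \<in> quot_V M (quot_V N V)"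
    and eq: "\<Union>B1 = \<Union>B2"
  obtain v1 where v1: "v1 \<in> V" "B1 = orbit M (orbit N v1)" "\<Union>B1 = orbit (preimage M) v1"
    using B1 by (rule quot_V_quot_VE)
  obtain v2 where v2: "v2 \<in> V" "B2 = orbit M (orbit N v2)" "\<Union>B2 = orbit (preimage M) v2"
    using B2 by (rule quot_V_quot_VE)
  have "v2 \<in> orbit (preimage M) v1"
    using orbit_eq_iff[OF normal_subgroup_Bij[OF preimage_normal] v1(1) v2(1)] eq v1(3) v2(3) by simp
  then obtain g where g: "g \<in> G" "induced_perm N V g \<in> M" "v2 = g v1"
    by (auto simp: preimage_def elim: orbitE)
  then have "orbit N v2 \<in> orbit M (orbit N v1)"
    using orbitI[OF g(2)] induced_perm_orbit[OF g(1) v1(1)] by metis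
  then show "B1 = B2"
    using orbit_eq_of_mem[OF M_subgroup quot_VI[OF v1(1)]] v1(2) v2(2) by simp
qed

lemma valency_le_quotient_quotient:
  assumes "valency_le k (quot_V (preimage M) V) (quot_E (preimage M) V E)"
  shows "valency_le k (quot_V M (quot_V N V)) (quot_E M (quot_V N V) (quot_E N V E))"
proof (rule valency_le_inj_hom[OF assms inj_on_Union_quot_V])
  show "Union ` quot_V M (quot_V N V) \<subseteq> quot_V (preimage M) V"
    using Union_quot_V by blast
next
  fix A B assume A: "A \<in> quot_V M (quot_V N V)" and B: "B \<in> quot_V M (quot_V N V)"
    and AB: "quot_E M (quot_V N V) (quot_E N V E) A B"
  then have "\<Union>A \<noteq> \<Union>B" using inj_onD[OF inj_on_Union_quot_V] by (auto simp: quot_E_def)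
  moreover have "\<exists>x\<in>\<Union>A. \<exists>y\<in>\<Union>B. E x y" using AB by (auto simp: quot_E_def)
  moreover have "\<Union>A \<in> quot_V (preimage M) V" "\<Union>B \<in> quot_V (preimage M) V"
    using Union_quot_V A B by blast+
  ultimately show "quot_E (preimage M) V E (\<Union>A) (\<Union>B)" by (simp add: quot_E_def)
qed

end

end

locale tetravalent_normal_quotient = normal_quotient +
  assumes quotient_tetravalent: "tetravalent (quot_V N V) (quot_E N V E)"
begin

lemma card_quotient_neighbours: "v \<in> V \<Longrightarrow> card (quotient_neighbours N v) = 4"
  using quotient_tetravalent tetravalent_quotient_iff by blast

lemma neighbour_orbit_inj:
  assumes "y \<in> V" "E y z" "E y z'" "orbit N z = orbit N z'"
  shows "z = z'"
proof -
  have "z \<in> neighbours V E y" "z' \<in> neighbours V E y"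
    using assms edge_vertices by (auto simp: neighbours_def)
  then show ?thesis
    using inj_on_orbit_neighbours[OF N_normal assms(1) card_quotient_neighbours[OF assms(1)]] assms(4)
    by (auto dest: inj_onD)
qed

lemma neighbour_orbit_ne: "E v u \<Longrightarrow> orbit N u \<noteq> orbit N v"
  using orbit_neighbour_ne[OF N_normal _ card_quotient_neighbours] edge_vertices
  by (simp add: neighbours_def)

lemma adjust_by_N:
  assumes g: "g \<in> G" and x: "x \<in> V" and y: "y \<in> V" and gx: "orbit N (g x) = orbit N y"
  obtains n where "n \<in> N" and "compose V (perm_inv V n) g x = y"
proof -
  have "g x \<in> orbit N y"
    using gx self_in_orbit[OF N_subgroup G_apply[OF g x]] by simp
  then obtain n where n: "n \<in> N" "g x = n y" by (rule orbitE)
  then have "compose V (perm_inv V n) g x = y"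
    using x y perm_inv_left[OF perm_subgroup_Bij[OF N_subgroup n(1)]] by (simp add: compose_def)
  with n(1) show ?thesis by (rule that)
qed

lemma
  assumes g: "g \<in> G" and n: "n \<in> N"
  shows compose_perm_inv_N: "compose V (perm_inv V n) g \<in> G"
    and orbit_compose_perm_inv_N:
      "z \<in> V \<Longrightarrow> orbit N (compose V (perm_inv V n) g z) = orbit N (g z)"
  using G_compose[OF G_inv g] subsetD[OF N_subset_G n]
    orbit_apply[OF N_subgroup G_apply[OF g] perm_subgroup_inv[OF N_subgroup n]]
  by (auto simp: compose_def)

text \<open>Since the neighbours of a vertex lie in distinct \<open>N\<close>-orbits, an orbit-preserving
automorphism fixing a vertex fixes its neighbours; connectedness does the rest.\<close>

lemma fixes_all_vertices:
  assumes k: "k \<in> G" and v: "v \<in> V" "k v = v"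
    and orbits: "\<And>z. z \<in> V \<Longrightarrow> orbit N (k z) = orbit N z"
    and x: "x \<in> V"
  shows "k x = x"
proof -
  have "(\<lambda>x y. E x y \<and> x \<in> V \<and> y \<in> V)\<^sup>*\<^sup>* v x"
    using graph_connected v(1) x by (simp add: connected_graph_def)
  then show ?thesis
  proof (induction rule: rtranclp_induct)
    case (step y z)
    then have yz: "E y z" "y \<in> V" "z \<in> V" and "k y = y" by auto
    then have "E y (k z)" using G_edge[OF k yz(1)] by simp
    then show "k z = z" using neighbour_orbit_inj[OF yz(2) _ yz(1)] orbits[OF yz(3)] by blast
  qed (use v in simp)
qed

lemma action_kernel_eq: "action_kernel G N V = N"
proof
  show "action_kernel G N V \<subseteq> N"
  proof
    fix g assume "g \<in> action_kernel G N V"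
    then have g: "g \<in> G" and eq: "restrict (image g) (quot_V N V) = (\<lambda>A\<in>quot_V N V. A)"
      by (auto simp: action_kernel_def induced_perm_def)
    have fixed: "g ` A = A" if "A \<in> quot_V N V" for A
      using fun_cong[OF eq, of A] that by simp
    have orbits: "orbit N (g z) = orbit N z" if "z \<in> V" for z
      using fixed[OF quot_VI[OF that]] G_image_orbit[OF N_normal g that] by simp
    obtain v where v: "v \<in> V" using graph_connected by (auto simp: connected_graph_def)
    obtain n where n: "n \<in> N" and kv: "compose V (perm_inv V n) g v = v"
      using adjust_by_N[OF g v v orbits[OF v]] .
    have "compose V (perm_inv V n) g z = z" if "z \<in> V" for z
      using fixes_all_vertices[OF compose_perm_inv_N[OF g n] v kv _ that]
        orbit_compose_perm_inv_N[OF g n] orbits by simp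
    then have "perm_inv V n (g z) = z" if "z \<in> V" for z
      using that by (simp add: compose_def)
    then have "g z = n z" if "z \<in> V" for z
      using that perm_inv_right[OF perm_subgroup_Bij[OF N_subgroup n] G_apply[OF g that]] by metis
    then have "g = n" by (rule Bij_eqI[OF G_Bij[OF g] perm_subgroup_Bij[OF N_subgroup n]])
    with n show "g \<in> N" by simp
  qed
qed (rule N_subset_action_kernel)

lemma no_orbit_reversal:
  assumes g: "g \<in> G" and e: "E u w"
    and gu: "orbit N (g u) = orbit N w" and gw: "orbit N (g w) = orbit N u"
  shows False
proof -
  have u: "u \<in> V" and w: "w \<in> V" using edge_vertices[OF e] by auto
  obtain n where n: "n \<in> N" and ku: "compose V (perm_inv V n) g u = w"
    using adjust_by_N[OF g u w gu] .
  let ?k = "compose V (perm_inv V n) g"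
  have k: "?k \<in> G" using compose_perm_inv_N[OF g n] .
  have "E w (?k w)" using G_edge[OF k e] ku by simp
  moreover have "orbit N (?k w) = orbit N u" using orbit_compose_perm_inv_N[OF g n w] gw by simp
  ultimately have "?k w = u" using neighbour_orbit_inj[OF w _ edge_sym[OF e]] by blast
  then show False using no_edge_reversal[OF k e ku] by simp
qed

lemma quotient_not_arc_transitive:
  "\<not> arc_transitive (induced_group G N V) (quot_V N V) (quot_E N V E)"
proof
  assume arc: "arc_transitive (induced_group G N V) (quot_V N V) (quot_E N V E)"
  obtain u w where e: "E u w" using ex_edge by blast
  have u: "u \<in> V" and w: "w \<in> V" using edge_vertices[OF e] by auto
  have F: "quot_E N V E (orbit N u) (orbit N w)" "quot_E N V E (orbit N w) (orbit N u)"
    unfolding quot_E_def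
    using e edge_sym[OF e] neighbour_orbit_ne[OF e] self_in_orbit[OF N_subgroup u]
      self_in_orbit[OF N_subgroup w] quot_VI[OF u] quot_VI[OF w] by blast+
  obtain h where "h \<in> induced_group G N V" "h (orbit N u) = orbit N w" "h (orbit N w) = orbit N u"
    using arc[unfolded arc_transitive_def, rule_format, OF F] by blast
  then obtain g where "g \<in> G" "orbit N (g u) = orbit N w" "orbit N (g w) = orbit N u"
    using induced_perm_orbit[OF _ u] induced_perm_orbit[OF _ w] by (auto simp: induced_group_def)
  then show False using no_orbit_reversal e by blast
qed

lemma quotient_half_arc_transitive:
  "half_arc_transitive (induced_group G N V) (quot_V N V) (quot_E N V E)"
  using quotient_subgroup_Aut quotient_vertex_transitive quotient_edge_transitive
    quotient_not_arc_transitive by (simp add: half_arc_transitive_def)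

lemma basic_if_maximal:
  assumes maximal: "\<And>N'. N' \<lhd> perm_grp V G \<Longrightarrow> card N < card N' \<Longrightarrow>
    \<not> tetravalent (quot_V N' V) (quot_E N' V E)"
  shows "basic (induced_group G N V) (quot_V N V) (quot_E N V E)"
  unfolding basic_def
proof (intro conjI allI impI)
  fix M assume M: "M \<lhd> perm_grp (quot_V N V) (induced_group G N V)"
    and nontrivial: "M \<noteq> {\<lambda>A\<in>quot_V N V. A}"
  have "\<not> tetravalent (quot_V (preimage M) V) (quot_E (preimage M) V E)"
    using maximal[OF preimage_normal[OF M] card_less_preimage[OF M nontrivial]] .
  then have "valency_le 2 (quot_V (preimage M) V) (quot_E (preimage M) V E)"
    using normal_quotient_dichotomy[OF preimage_normal[OF M]] by blast
  then show "valency_le 2 (quot_V M (quot_V N V)) (quot_E M (quot_V N V) (quot_E N V E))"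
    by (rule valency_le_quotient_quotient[OF M])
qed (simp_all add: quotient_connected quotient_tetravalent quotient_half_arc_transitive)

end

theorem lemma5p1:
  fixes V :: "'a set" and E :: "'a \<Rightarrow> 'a \<Rightarrow> bool" and G :: "('a \<Rightarrow> 'a) set"
  assumes "finite V"
    and "simple_graph V E"
    and "connected_graph V E"
    and "tetravalent V E"
    and "half_arc_transitive G V E"
  shows "\<exists>N. normal N (perm_grp V G) \<and> action_kernel G N V = N \<and>
    tetravalent (quot_V N V) (quot_E N V E) \<and>
    basic (induced_group G N V) (quot_V N V) (quot_E N V E)"
proof -
  interpret half_arc_transitive_graph V E G
    using assms by unfold_locales
  let ?P = "\<lambda>N. N \<lhd> perm_grp V G \<and> tetravalent (quot_V N V) (quot_E N V E)"
  have "card N < Suc (card G)" if "?P N" for N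
    using card_mono[OF finite_G normal_subset_G] that by (simp add: le_imp_less_Suc)
  then obtain N where N: "?P N" and maximal: "\<And>N'. ?P N' \<Longrightarrow> card N' \<le> card N"
    using ex_has_greatest_nat[of ?P "{\<lambda>x\<in>V. x}" card "Suc (card G)"]
      normal_trivial tetravalent_trivial_quotient by blast
  interpret tetravalent_normal_quotient V E G N
    using N by (auto intro!: tetravalent_normal_quotient.intro normal_quotient.intro
        normal_quotient_axioms.intro tetravalent_normal_quotient_axioms.intro
        half_arc_transitive_graph_axioms)
  show ?thesis
    using N action_kernel_eq basic_if_maximal maximal by (meson not_le)
qed

end
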